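(* For every set of formulas $\Delta$ and every formula $\varphi$ of $\mathrm{PRED2}_0$: if $\Delta\vdash_{\mathrm{PRED2}_0}\varphi$ then $\lceil\Delta\rceil,\Gamma(\Delta\cup\{\varphi\})\vdash_{\mathcal I_0}\lceil\varphi\rceil$.
   Context: $\mathrm{PRED2}_0$: types $\mathcal T::=o\mid\mathcal B\mid\mathcal B\to\mathcal T$ with $\mathcal B$ a finite set of base types; for each type $\tau$, countable sets $V_\tau$ of variables and $\Sigma_\tau$ of constants; terms of type $\tau$: variables, constants, applications $t_1t_2$ ($t_1\in T_{\sigma\to\tau}$, $t_2\in T_\sigma$, $\sigma\in\mathcal B$); formulas (type $o$) additionally include $\varphi\supset\psi$ and $\forall x.\varphi$ for $x\in V_\sigma$, $\sigma\in\mathcal B\cup\{o\}$; $\alpha$-equivalent formulas identified. Derivation rules: axiom $\Delta,\varphi\vdash\varphi$; $\supset$-introduction (from $\Delta,\varphi\vdash\psi$ infer $\Delta\vdash\varphi\supset\psi$); modus ponens; $\forall$-introduction (from $\Delta\vdash\varphi$ infer $\Delta\vdash\forall x_\tau.\varphi$ if $x_\tau\notin FV(\Delta)$); $\forall$-elimination (from $\Delta\vdash\forall x_\tau.\varphi$ infer $\Delta\vdash\varphi[x/t]$, $t\in T_\tau$). For arbitrary $\Delta$, derivability means from a finite subset. $\mathcal I_0$: primitive constants $\Sigma$ contain $\Xi$, $L$, $A_\tau$ ($\tau\in\mathcal B$) and every constant of every $\Sigma_\tau$; variables of $\mathrm{PRED2}_0$ are variables of $\mathcal I_0$; terms are type-free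 lambda-terms over $\Sigma$. Abbreviations: $I=\lambda x.x$, $K=\lambda xy.x$, $H=\lambda x.L(Kx)$, $\supset\;=\lambda xy.\Xi(Kx)(Ky)$ (infix), $F=\lambda xyf.\Xi x(\lambda z.y(fz))$. Axioms: $\Gamma,t\vdash t$; $\Gamma\vdash LH$; $\Gamma\vdash LA_\tau$ ($\tau\in\mathcal B$). Rules: (Eq) from $\Gamma\vdash t_1$, $t_1=_{\beta\eta}t_2$ infer $\Gamma\vdash t_2$; ($H_i$) from $\Gamma\vdash t$ infer $\Gamma\vdash Ht$; ($\Xi_e$) from $\Gamma\vdash\Xi t_1t_2$, $\Gamma\vdash t_1t_3$ infer $\Gamma\vdash t_2t_3$; ($\Xi_i$) from $\Gamma,t_1x\vdash t_2x$, $\Gamma\vdash Lt_1$ infer $\Gamma\vdash\Xi t_1t_2$; ($\Xi_H$) from $\Gamma,t_1x\vdash H(t_2x)$, $\Gamma\vdash Lt_1$ infer $\Gamma\vdash H(\Xi t_1t_2)$; in the last two $x\notin FV(\Gamma,t_1,t_2)$. For arbitrary $\Gamma$, $\Gamma\vdash_{\mathcal I_0}t$ means derivable from a finite subset. Set $A_o=H$ and $A_{\tau_1\to\tau_2}=FA_{\tau_1}A_{\tau_2}$. Translation $\lceil\cdot\rceil$: $\lceil x\rceil=x$, $\lceil c\rceil=c$, $\lceil t_1t_2\rceil=\lceil t_1\rceil\lceil t_2\rceil$, $\lceil\varphi\supset\psi\rceil=\lceil\varphi\rceil\supset\lceil\psi\rceil$, $\lceil\forall x.\varphi\rceil=\Xi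 A_\tau(\lambda x.\lceil\varphi\rceil)$ for $x\in V_\tau$; $\lceil\Delta\rceil$ is the image of $\Delta$. For a set of formulas $\Delta$, $\Gamma(\Delta)$ consists of: $A_\tau x$ for every $x\in FV(\Delta)$ with $x\in V_\tau$; $A_\tau c$ for every $c\in\Sigma_\tau$ and every $\tau$; $LA_\tau$ for every $\tau\in\mathcal B$; and, for each $\tau\in\mathcal B$, $A_\tau y$ for some chosen variable $y\in V_\tau$ with $y\notin FV(\Delta)$. *)

theory Defs
  imports Main "HOL-Library.Countable"
begin

text \<open>Types T ::= o | B | B -> T, with B the finite type of base types 'b.\<close>
datatype 'b ty = To | Base 'b | Arr 'b "'b ty"

text \<open>Variables of type tau: V_tau = {(n, tau) | n :: nat} (countably infinite per type).\<close>
type_synonym 'b var = "nat \<times> 'b ty"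

text \<open>Syntax of PRED2_0 terms/formulas in locally nameless style: free variables are
  named (PV), bound variables are de Bruijn indices (PB); hence alpha-equivalent
  formulas are literally equal.\<close>
datatype ('b, 'c) pt =
    PV "'b var" | PB nat | PC 'c | PAp "('b, 'c) pt" "('b, 'c) pt"
  | PImp "('b, 'c) pt" "('b, 'c) pt" | PAll "'b ty" "('b, 'c) pt"

text \<open>Well-typedness; the list gives the types of the loose de Bruijn indices.
  ctype c is the type tau with c in Sigma_tau.\<close>
inductive typed :: "('c \<Rightarrow> 'b ty) \<Rightarrow> 'b ty list \<Rightarrow> ('b, 'c) pt \<Rightarrow> 'b ty \<Rightarrow> bool"
  for ctype where
  t_var: "typed ctype Ts (PV (n, \<tau>)) \<tau>"
| t_bnd: "i < length Ts \<Longrightarrow> typed ctype Ts (PB i) (Ts ! i)"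
| t_con: "typed ctype Ts (PC c) (ctype c)"
| t_app: "typed ctype Ts t1 (Arr \<sigma> \<tau>) \<Longrightarrow> typed ctype Ts t2 (Base \<sigma>) \<Longrightarrow>
          typed ctype Ts (PAp t1 t2) \<tau>"
| t_imp: "typed ctype Ts \<phi> To \<Longrightarrow> typed ctype Ts \<psi> To \<Longrightarrow> typed ctype Ts (PImp \<phi> \<psi>) To"
| t_all: "\<sigma> = To \<or> (\<exists>b. \<sigma> = Base b) \<Longrightarrow> typed ctype (\<sigma> # Ts) \<phi> To \<Longrightarrow>
          typed ctype Ts (PAll \<sigma> \<phi>) To"

definition term_of :: "('c \<Rightarrow> 'b ty) \<Rightarrow> ('b, 'c) pt \<Rightarrow> 'b ty \<Rightarrow> bool" where
  "term_of ctype t \<tau> \<longleftrightarrow> typed ctype [] t \<tau>"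

definition formula :: "('c \<Rightarrow> 'b ty) \<Rightarrow> ('b, 'c) pt \<Rightarrow> bool" where
  "formula ctype \<phi> \<longleftrightarrow> typed ctype [] \<phi> To"

primrec fvp :: "('b, 'c) pt \<Rightarrow> 'b var set" where
  "fvp (PV x) = {x}"
| "fvp (PB i) = {}"
| "fvp (PC c) = {}"
| "fvp (PAp t1 t2) = fvp t1 \<union> fvp t2"
| "fvp (PImp t1 t2) = fvp t1 \<union> fvp t2"
| "fvp (PAll \<sigma> t) = fvp t"

definition FVs :: "('b, 'c) pt set \<Rightarrow> 'b var set" where
  "FVs \<Delta> = (\<Union>\<delta>\<in>\<Delta>. fvp \<delta>)"

primrec openp :: "nat \<Rightarrow> ('b, 'c) pt \<Rightarrow> ('b, 'c) pt \<Rightarrow> ('b, 'c) pt" where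
  "openp k t (PV y) = PV y"
| "openp k t (PB i) = (if i = k then t else PB i)"
| "openp k t (PC c) = PC c"
| "openp k t (PAp t1 t2) = PAp (openp k t t1) (openp k t t2)"
| "openp k t (PImp t1 t2) = PImp (openp k t t1) (openp k t t2)"
| "openp k t (PAll \<sigma> u) = PAll \<sigma> (openp (Suc k) t u)"

primrec closep :: "nat \<Rightarrow> 'b var \<Rightarrow> ('b, 'c) pt \<Rightarrow> ('b, 'c) pt" where
  "closep k x (PV y) = (if y = x then PB k else PV y)"
| "closep k x (PB i) = PB i"
| "closep k x (PC c) = PC c"
| "closep k x (PAp t1 t2) = PAp (closep k x t1) (closep k x t2)"
| "closep k x (PImp t1 t2) = PImp (closep k x t1) (closep k x t2)"
| "closep k x (PAll \<sigma> u) = PAll \<sigma> (closep (Suc k) x u)"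

text \<open>forall x.phi for x in V_tau is PAll tau (closep 0 x phi); phi[x/t] for the body of
  PAll tau psi is openp 0 t psi.\<close>

inductive pder :: "('c \<Rightarrow> 'b ty) \<Rightarrow> ('b, 'c) pt set \<Rightarrow> ('b, 'c) pt \<Rightarrow> bool"
  for ctype where
  p_ax:   "formula ctype \<phi> \<Longrightarrow> pder ctype (insert \<phi> \<Delta>) \<phi>"
| p_impI: "formula ctype \<phi> \<Longrightarrow> pder ctype (insert \<phi> \<Delta>) \<psi> \<Longrightarrow> pder ctype \<Delta> (PImp \<phi> \<psi>)"
| p_mp:   "pder ctype \<Delta> \<phi> \<Longrightarrow> pder ctype \<Delta> (PImp \<phi> \<psi>) \<Longrightarrow> pder ctype \<Delta> \<psi>"
| p_allI: "pder ctype \<Delta> \<phi> \<Longrightarrow> x = (n, \<tau>) \<Longrightarrow> \<tau> = To \<or> (\<exists>b. \<tau> = Base b) \<Longrightarrow>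
           x \<notin> FVs \<Delta> \<Longrightarrow> pder ctype \<Delta> (PAll \<tau> (closep 0 x \<phi>))"
| p_allE: "pder ctype \<Delta> (PAll \<tau> \<phi>) \<Longrightarrow> term_of ctype t \<tau> \<Longrightarrow> pder ctype \<Delta> (openp 0 t \<phi>)"

definition pred_derivable :: "('c \<Rightarrow> 'b ty) \<Rightarrow> ('b, 'c) pt set \<Rightarrow> ('b, 'c) pt \<Rightarrow> bool" where
  "pred_derivable ctype \<Delta> \<phi> \<longleftrightarrow> (\<exists>\<Delta>0 \<subseteq> \<Delta>. finite \<Delta>0 \<and> pder ctype \<Delta>0 \<phi>)"

datatype ('b, 'c) iconst = Xi | Lc | Abase 'b | Sig 'c

datatype ('b, 'c) lt =
    LV "'b var" | LB nat | LC "('b, 'c) iconst" | LAp "('b, 'c) lt" "('b, 'c) lt" | LAbs "('b, 'c) lt"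

primrec lift :: "('b, 'c) lt \<Rightarrow> nat \<Rightarrow> ('b, 'c) lt" where
  "lift (LV x) k = LV x"
| "lift (LB i) k = (if i < k then LB i else LB (Suc i))"
| "lift (LC c) k = LC c"
| "lift (LAp s t) k = LAp (lift s k) (lift t k)"
| "lift (LAbs s) k = LAbs (lift s (Suc k))"

primrec subst :: "('b, 'c) lt \<Rightarrow> ('b, 'c) lt \<Rightarrow> nat \<Rightarrow> ('b, 'c) lt" where
  "subst (LV x) s k = LV x"
| "subst (LB i) s k = (if k < i then LB (i - 1) else if i = k then s else LB i)"
| "subst (LC c) s k = LC c"
| "subst (LAp t u) s k = LAp (subst t s k) (subst u s k)"
| "subst (LAbs t) s k = LAbs (subst t (lift s 0) (Suc k))"

inductive beq :: "('b, 'c) lt \<Rightarrow> ('b, 'c) lt \<Rightarrow> bool" where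
  beq_refl:  "beq t t"
| beq_sym:   "beq s t \<Longrightarrow> beq t s"
| beq_trans: "beq s t \<Longrightarrow> beq t u \<Longrightarrow> beq s u"
| beq_beta:  "beq (LAp (LAbs s) t) (subst s t 0)"
| beq_eta:   "beq (LAbs (LAp (lift s 0) (LB 0))) s"
| beq_app:   "beq s s' \<Longrightarrow> beq t t' \<Longrightarrow> beq (LAp s t) (LAp s' t')"
| beq_abs:   "beq s s' \<Longrightarrow> beq (LAbs s) (LAbs s')"

primrec lc_at :: "nat \<Rightarrow> ('b, 'c) lt \<Rightarrow> bool" where
  "lc_at k (LV x) = True"
| "lc_at k (LB i) = (i < k)"
| "lc_at k (LC c) = True"
| "lc_at k (LAp s t) = (lc_at k s \<and> lc_at k t)"
| "lc_at k (LAbs s) = lc_at (Suc k) s"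

primrec fvl :: "('b, 'c) lt \<Rightarrow> 'b var set" where
  "fvl (LV x) = {x}"
| "fvl (LB i) = {}"
| "fvl (LC c) = {}"
| "fvl (LAp s t) = fvl s \<union> fvl t"
| "fvl (LAbs s) = fvl s"

definition fvls :: "('b, 'c) lt set \<Rightarrow> 'b var set" where
  "fvls \<Gamma> = (\<Union>t\<in>\<Gamma>. fvl t)"

definition cI :: "('b, 'c) lt" where "cI = LAbs (LB 0)"
definition cK :: "('b, 'c) lt" where "cK = LAbs (LAbs (LB 1))"
definition cL :: "('b, 'c) lt" where "cL = LC Lc"
definition cXi :: "('b, 'c) lt" where "cXi = LC Xi"
definition cH :: "('b, 'c) lt" where "cH = LAbs (LAp cL (LAp cK (LB 0)))"
definition cImp :: "('b, 'c) lt" where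
  "cImp = LAbs (LAbs (LAp (LAp cXi (LAp cK (LB 1))) (LAp cK (LB 0))))"
definition cF :: "('b, 'c) lt" where
  "cF = LAbs (LAbs (LAbs (LAp (LAp cXi (LB 2)) (LAbs (LAp (LB 2) (LAp (LB 1) (LB 0)))))))"

inductive ider :: "('b, 'c) lt set \<Rightarrow> ('b, 'c) lt \<Rightarrow> bool" where
  i_ax:  "t \<in> \<Gamma> \<Longrightarrow> ider \<Gamma> t"
| i_LH:  "ider \<Gamma> (LAp cL cH)"
| i_LA:  "ider \<Gamma> (LAp cL (LC (Abase b)))"
| i_Eq:  "ider \<Gamma> t1 \<Longrightarrow> beq t1 t2 \<Longrightarrow> lc_at 0 t2 \<Longrightarrow> ider \<Gamma> t2"
| i_H:   "ider \<Gamma> t \<Longrightarrow> ider \<Gamma> (LAp cH t)"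
| i_Xe:  "ider \<Gamma> (LAp (LAp cXi t1) t2) \<Longrightarrow> ider \<Gamma> (LAp t1 t3) \<Longrightarrow> ider \<Gamma> (LAp t2 t3)"
| i_Xi:  "ider (insert (LAp t1 (LV x)) \<Gamma>) (LAp t2 (LV x)) \<Longrightarrow> ider \<Gamma> (LAp cL t1) \<Longrightarrow>
          x \<notin> fvls \<Gamma> \<union> fvl t1 \<union> fvl t2 \<Longrightarrow> ider \<Gamma> (LAp (LAp cXi t1) t2)"
| i_XH:  "ider (insert (LAp t1 (LV x)) \<Gamma>) (LAp cH (LAp t2 (LV x))) \<Longrightarrow> ider \<Gamma> (LAp cL t1) \<Longrightarrow>
          x \<notin> fvls \<Gamma> \<union> fvl t1 \<union> fvl t2 \<Longrightarrow> ider \<Gamma> (LAp cH (LAp (LAp cXi t1) t2))"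

definition i0_derivable :: "('b, 'c) lt set \<Rightarrow> ('b, 'c) lt \<Rightarrow> bool" where
  "i0_derivable \<Gamma> t \<longleftrightarrow> (\<exists>\<Gamma>0 \<subseteq> \<Gamma>. finite \<Gamma>0 \<and> ider \<Gamma>0 t)"

primrec At :: "'b ty \<Rightarrow> ('b, 'c) lt" where
  "At To = cH"
| "At (Base b) = LC (Abase b)"
| "At (Arr b \<tau>) = LAp (LAp cF (LC (Abase b))) (At \<tau>)"

primrec tr :: "('b, 'c) pt \<Rightarrow> ('b, 'c) lt" where
  "tr (PV x) = LV x"
| "tr (PB i) = LB i"
| "tr (PC c) = LC (Sig c)"
| "tr (PAp t1 t2) = LAp (tr t1) (tr t2)"
| "tr (PImp \<phi> \<psi>) = LAp (LAp cImp (tr \<phi>)) (tr \<psi>)"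
| "tr (PAll \<tau> \<phi>) = LAp (LAp cXi (At \<tau>)) (LAbs (tr \<phi>))"

text \<open>Gamma(Delta), relative to the choice ysel b of a variable of type b not free in Delta.\<close>
definition GammaD :: "('c \<Rightarrow> 'b ty) \<Rightarrow> ('b \<Rightarrow> 'b var) \<Rightarrow> ('b, 'c) pt set \<Rightarrow> ('b, 'c) lt set" where
  "GammaD ctype ysel \<Delta> =
     {LAp (At (snd x)) (LV x) | x. x \<in> FVs \<Delta>}
   \<union> {LAp (At (ctype c)) (LC (Sig c)) | c. True}
   \<union> {LAp cL (LC (Abase b)) | b. True}
   \<union> {LAp (At (Base b)) (LV (ysel b)) | b. True}"

end

theory Submission
  imports Defs
begin

(* Each rule of PRED2_0 is simulated by a derived rule of I_0:
   implication introduction and modus ponens become a deduction theorem and a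
   modus ponens for the combinatory implication (Xi applied to K-abstractions),
   and the quantifier rules become the Xi-rules, using that A_tau holds for every
   well-typed term of type tau (the typing lemma).  The invariant keeps in the
   I_0 context an assumption A_tau x for every variable x of a finite set S; the
   premise of modus ponens or forall-elimination may mention variables outside S,
   and these are eliminated afterwards by substituting canonical inhabitants of
   the types, which exist because each A_b is inhabited by the chosen y_b. *)

lemma lc_at_mono: "lc_at k t \<Longrightarrow> k \<le> j \<Longrightarrow> lc_at j t"
  by (induction t arbitrary: k j) auto

lemma lift_closed: "lc_at k t \<Longrightarrow> k \<le> j \<Longrightarrow> lift t j = t"
  by (induction t arbitrary: k j) auto

lemma subst_closed: "lc_at k t \<Longrightarrow> k \<le> j \<Longrightarrow> subst t s j = t"
  by (induction t arbitrary: k j s) auto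

lemmas lift_closed0[simp] = lift_closed[OF _ le0]
  and subst_closed0[simp] = subst_closed[OF _ le0]

primrec lsubst :: "('b var \<Rightarrow> ('b,'c) lt) \<Rightarrow> ('b,'c) lt \<Rightarrow> ('b,'c) lt" where
  "lsubst \<sigma> (LV x) = \<sigma> x"
| "lsubst \<sigma> (LB i) = LB i"
| "lsubst \<sigma> (LC c) = LC c"
| "lsubst \<sigma> (LAp s t) = LAp (lsubst \<sigma> s) (lsubst \<sigma> t)"
| "lsubst \<sigma> (LAbs s) = LAbs (lsubst \<sigma> s)"

text \<open>A substitution is admissible if it only substitutes closed terms; such
  substitutions commute with the de Bruijn operations and hence with beta-eta.\<close>
definition closed_subst :: "('b var \<Rightarrow> ('b,'c) lt) \<Rightarrow> bool" where
  "closed_subst \<sigma> \<longleftrightarrow> (\<forall>v. lc_at 0 (\<sigma> v))"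

lemma closed_subst_LV [simp]: "closed_subst LV"
  by (simp add: closed_subst_def)

lemma closed_subst_upd [simp]: "closed_subst \<sigma> \<Longrightarrow> closed_subst (\<sigma>(x := LV y))"
  by (simp add: closed_subst_def)

lemma lsubst_lift: "closed_subst \<sigma> \<Longrightarrow> lsubst \<sigma> (lift t k) = lift (lsubst \<sigma> t) k"
  by (induction t arbitrary: k) (auto simp: closed_subst_def)

lemma lsubst_subst:
  "closed_subst \<sigma> \<Longrightarrow> lsubst \<sigma> (subst t s k) = subst (lsubst \<sigma> t) (lsubst \<sigma> s) k"
  by (induction t arbitrary: s k) (auto simp: closed_subst_def lsubst_lift)

lemma beq_lsubst: "beq s t \<Longrightarrow> closed_subst \<sigma> \<Longrightarrow> beq (lsubst \<sigma> s) (lsubst \<sigma> t)"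
proof (induction rule: beq.induct)
  case (beq_beta s t)
  then show ?case by (simp add: lsubst_subst beq.beq_beta)
next
  case (beq_eta s)
  then show ?case by (simp add: lsubst_lift beq.beq_eta)
qed (auto intro: beq.intros)

lemma lc_at_lsubst: "lc_at k t \<Longrightarrow> closed_subst \<sigma> \<Longrightarrow> lc_at k (lsubst \<sigma> t)"
  by (induction t arbitrary: k) (auto simp: closed_subst_def intro: lc_at_mono)

lemma lsubst_cong: "(\<And>v. v \<in> fvl t \<Longrightarrow> \<sigma> v = \<tau> v) \<Longrightarrow> lsubst \<sigma> t = lsubst \<tau> t"
  by (induction t) auto

lemma lsubst_LV [simp]: "lsubst LV t = t"
  by (induction t) auto

lemma lsubst_closed_term: "fvl t = {} \<Longrightarrow> lsubst \<sigma> t = t"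
  using lsubst_cong[of t \<sigma> LV] by simp

lemma lsubst_upd_fresh [simp]: "x \<notin> fvl t \<Longrightarrow> lsubst (\<sigma>(x := s)) t = lsubst \<sigma> t"
  by (rule lsubst_cong) auto

lemma finite_fvl [simp]: "finite (fvl t)"
  by (induction t) auto

lemma fvls_insert [simp]: "fvls (insert a G) = fvl a \<union> fvls G"
  by (simp add: fvls_def)

lemma fvls_mono: "A \<subseteq> B \<Longrightarrow> fvls A \<subseteq> fvls B"
  by (auto simp: fvls_def)

lemma finite_fvls: "finite A \<Longrightarrow> finite (fvls A)"
  by (simp add: fvls_def)

lemma fresh_var: "finite X \<Longrightarrow> \<exists>n::nat. (n, \<tau>) \<notin> X"
proof -
  assume "finite X"
  then obtain n where "n \<notin> fst ` X"
    using ex_new_if_finite[OF infinite_UNIV_nat] by blast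
  then have "(n, \<tau>) \<notin> X" by force
  then show ?thesis ..
qed

lemma obtain_fresh:
  assumes "finite (X :: 'b var set)"
  obtains x where "x \<notin> X"
  using fresh_var[OF assms] by blast

abbreviation LXi :: "('b,'c) lt \<Rightarrow> ('b,'c) lt \<Rightarrow> ('b,'c) lt" where
  "LXi a b \<equiv> LAp (LAp cXi a) b"

abbreviation LImp :: "('b,'c) lt \<Rightarrow> ('b,'c) lt \<Rightarrow> ('b,'c) lt" where
  "LImp a b \<equiv> LAp (LAp cImp a) b"

lemma combinators_closed [simp]:
  "fvl cK = {}" "fvl cL = {}" "fvl cXi = {}" "fvl cH = {}" "fvl cImp = {}" "fvl cF = {}"
  "lc_at k cK" "lc_at k cL" "lc_at k cXi" "lc_at k cH" "lc_at k cImp" "lc_at k cF"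
  by (simp_all add: cK_def cL_def cXi_def cH_def cImp_def cF_def)

lemma fvl_At [simp]: "fvl (At \<tau>) = {}"
  by (induction \<tau>) auto

lemma lc_at_At [simp]: "lc_at k (At \<tau>)"
  by (induction \<tau>) auto

lemma lsubst_combinators [simp]:
  "lsubst \<sigma> cL = cL" "lsubst \<sigma> cXi = cXi" "lsubst \<sigma> cH = cH" "lsubst \<sigma> (At \<tau>) = At \<tau>"
  by (simp_all add: lsubst_closed_term)

lemma beq_beta_eq: "u = subst s t 0 \<Longrightarrow> beq (LAp (LAbs s) t) u"
  using beq_beta by simp

lemma beq_K: "lc_at 0 a \<Longrightarrow> beq (LAp (LAp cK a) b) a"
  unfolding cK_def by (rule beq_trans[OF beq_app[OF beq_beta_eq beq_refl] beq_beta_eq]) auto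

lemma beq_H: "lc_at 0 a \<Longrightarrow> beq (LAp cH a) (LAp cL (LAp cK a))"
  unfolding cH_def by (rule beq_beta_eq) (simp add: cL_def cK_def)

lemma beq_Imp: "lc_at 0 a \<Longrightarrow> lc_at 0 b \<Longrightarrow> beq (LImp a b) (LXi (LAp cK a) (LAp cK b))"
  unfolding cImp_def
  by (rule beq_trans[OF beq_app[OF beq_beta_eq beq_refl] beq_beta_eq]) (auto simp: cXi_def cK_def)

lemma beq_F: "lc_at 0 a \<Longrightarrow> lc_at 0 c \<Longrightarrow> lc_at 0 f \<Longrightarrow>
   beq (LAp (LAp (LAp cF a) c) f) (LXi a (LAbs (LAp c (LAp f (LB 0)))))"
  unfolding cF_def
  by (rule beq_trans[OF beq_app[OF beq_trans[OF beq_app[OF beq_beta_eq beq_refl] beq_beta_eq]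
        beq_refl] beq_beta_eq])
     (auto simp: cXi_def)

section \<open>Metatheory of I_0: substitution, weakening, cut, compactness\<close>

text \<open>Quantifying
  over the extensions makes the substitution lemma below self-contained: the
  eigenvariable rules enlarge the context, and no separate weakening is needed.\<close>
definition inst_into :: "('b,'c) lt set \<Rightarrow> ('b var \<Rightarrow> ('b,'c) lt) \<Rightarrow> ('b,'c) lt set \<Rightarrow> bool" where
  "inst_into G0 \<sigma> G \<longleftrightarrow> (\<forall>g\<in>G0. \<forall>G'. G \<subseteq> G' \<longrightarrow> finite (fvls G') \<longrightarrow> ider G' (lsubst \<sigma> g))"

text \<open>Passing under an eigenvariable rule: the eigenvariable x is renamed to x'.\<close>
lemma inst_into_extend:
  assumes "inst_into G0 \<sigma> G" and "x \<notin> fvls G0 \<union> fvl t"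
  shows "inst_into (insert (LAp t (LV x)) G0) (\<sigma>(x := LV x')) (insert (LAp (lsubst \<sigma> t) (LV x')) G)"
  unfolding inst_into_def
proof (intro ballI allI impI)
  fix g G' assume g: "g \<in> insert (LAp t (LV x)) G0" and G': "insert (LAp (lsubst \<sigma> t) (LV x')) G \<subseteq> G'"
    and fin: "finite (fvls G')"
  show "ider G' (lsubst (\<sigma>(x := LV x')) g)"
  proof (cases "g \<in> G0")
    case True
    then have "x \<notin> fvl g" using assms(2) by (auto simp: fvls_def)
    then show ?thesis using assms(1) True G' fin by (auto simp: inst_into_def)
  next
    case False
    then show ?thesis using g G' assms(2) by (auto intro: ider.i_ax)
  qed
qed

lemma inst_into_fresh:
  assumes "finite (fvls G)" "inst_into G0 \<sigma> G" "x \<notin> fvls G0 \<union> fvl t1 \<union> fvl t2"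
  obtains x' where "x' \<notin> fvls G \<union> fvl (lsubst \<sigma> t1) \<union> fvl (lsubst \<sigma> t2)"
    and "inst_into (insert (LAp t1 (LV x)) G0) (\<sigma>(x := LV x')) (insert (LAp (lsubst \<sigma> t1) (LV x')) G)"
proof -
  have "finite (fvls G \<union> fvl (lsubst \<sigma> t1) \<union> fvl (lsubst \<sigma> t2))" using assms(1) by simp
  then obtain x' where "x' \<notin> fvls G \<union> fvl (lsubst \<sigma> t1) \<union> fvl (lsubst \<sigma> t2)"
    by (rule obtain_fresh)
  moreover have "inst_into (insert (LAp t1 (LV x)) G0) (\<sigma>(x := LV x')) (insert (LAp (lsubst \<sigma> t1) (LV x')) G)"
    using assms(2,3) by (intro inst_into_extend) auto
  ultimately show ?thesis by (rule that)
qed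

lemma ider_lsubst:
  "ider G0 t \<Longrightarrow> closed_subst \<sigma> \<Longrightarrow> finite (fvls G) \<Longrightarrow> inst_into G0 \<sigma> G \<Longrightarrow> ider G (lsubst \<sigma> t)"
proof (induction arbitrary: \<sigma> G rule: ider.induct)
  case (i_ax t G0)
  then show ?case unfolding inst_into_def by blast
next
  case (i_Eq G0 t1 t2)
  then show ?case using beq_lsubst ider.i_Eq lc_at_lsubst by metis
next
  case (i_Xi t1 x G0 t2)
  obtain x' where x': "x' \<notin> fvls G \<union> fvl (lsubst \<sigma> t1) \<union> fvl (lsubst \<sigma> t2)"
    and inst: "inst_into (insert (LAp t1 (LV x)) G0) (\<sigma>(x := LV x')) (insert (LAp (lsubst \<sigma> t1) (LV x')) G)"
    by (rule inst_into_fresh[OF i_Xi.prems(2,3) i_Xi.hyps(3)])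
  have "ider (insert (LAp (lsubst \<sigma> t1) (LV x')) G) (lsubst (\<sigma>(x := LV x')) (LAp t2 (LV x)))"
    by (rule i_Xi.IH(1)[OF _ _ inst]) (use i_Xi.prems(1,2) in \<open>simp_all add: closed_subst_def\<close>)
  then have "ider (insert (LAp (lsubst \<sigma> t1) (LV x')) G) (LAp (lsubst \<sigma> t2) (LV x'))" using i_Xi.hyps(3) by simp
  moreover have "ider G (LAp cL (lsubst \<sigma> t1))" using i_Xi.IH(2) i_Xi.prems by simp
  ultimately have "ider G (LXi (lsubst \<sigma> t1) (lsubst \<sigma> t2))" by (rule ider.i_Xi) (use x' in simp)
  then show ?case by simp
next
  case (i_XH t1 x G0 t2)
  obtain x' where x': "x' \<notin> fvls G \<union> fvl (lsubst \<sigma> t1) \<union> fvl (lsubst \<sigma> t2)"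
    and inst: "inst_into (insert (LAp t1 (LV x)) G0) (\<sigma>(x := LV x')) (insert (LAp (lsubst \<sigma> t1) (LV x')) G)"
    by (rule inst_into_fresh[OF i_XH.prems(2,3) i_XH.hyps(3)])
  have "ider (insert (LAp (lsubst \<sigma> t1) (LV x')) G) (lsubst (\<sigma>(x := LV x')) (LAp cH (LAp t2 (LV x))))"
    by (rule i_XH.IH(1)[OF _ _ inst]) (use i_XH.prems(1,2) in \<open>simp_all add: closed_subst_def\<close>)
  then have "ider (insert (LAp (lsubst \<sigma> t1) (LV x')) G) (LAp cH (LAp (lsubst \<sigma> t2) (LV x')))" using i_XH.hyps(3) by simp
  moreover have "ider G (LAp cL (lsubst \<sigma> t1))" using i_XH.IH(2) i_XH.prems by simp
  ultimately have "ider G (LAp cH (LXi (lsubst \<sigma> t1) (lsubst \<sigma> t2)))" by (rule ider.i_XH) (use x' in simp)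
  then show ?case by simp
next
  case (i_Xe G0 t1 t2 t3)
  then show ?case using ider.i_Xe[of G "lsubst \<sigma> t1" "lsubst \<sigma> t2" "lsubst \<sigma> t3"] by simp
next
  case (i_H G0 t)
  then have "ider G (lsubst \<sigma> t)" by simp
  then show ?case by (simp add: ider.i_H)
next
  case (i_LH G0)
  then show ?case using ider.i_LH by simp
next
  case (i_LA G0 b)
  then show ?case using ider.i_LA by simp
qed

lemma ider_weaken:
  assumes "ider G0 t" "G0 \<subseteq> G" "finite (fvls G)"
  shows "ider G t"
proof -
  have "inst_into G0 LV G" using assms(2) by (auto simp: inst_into_def intro: ider.i_ax)
  then show ?thesis using ider_lsubst[OF assms(1) closed_subst_LV assms(3)] by simp
qed

lemma ider_cut:
  assumes "ider G0 t" "closed_subst \<sigma>" "finite (fvls G)" "\<And>g. g \<in> G0 \<Longrightarrow> ider G (lsubst \<sigma> g)"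
  shows "ider G (lsubst \<sigma> t)"
proof -
  have "inst_into G0 \<sigma> G" using assms(4) ider_weaken unfolding inst_into_def by blast
  then show ?thesis by (rule ider_lsubst[OF assms(1-3)])
qed

lemma finite_support_merge:
  assumes "A \<subseteq> insert h G" "finite A" "ider A s" "B \<subseteq> G" "finite B" "ider B u"
  obtains C where "C \<subseteq> G" "finite C" "ider (insert h C) s" "ider C u"
proof
  let ?C = "(A - {h}) \<union> B"
  show C: "?C \<subseteq> G" "finite ?C" using assms by auto
  show "ider (insert h ?C) s"
    by (rule ider_weaken[OF assms(3)]) (use assms C in \<open>auto simp: finite_fvls\<close>)
  show "ider ?C u"
    by (rule ider_weaken[OF assms(6)]) (use assms C in \<open>auto simp: finite_fvls\<close>)
qed

lemma ider_compact: "ider G t \<Longrightarrow> \<exists>G0\<subseteq>G. finite G0 \<and> ider G0 t"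
proof (induction rule: ider.induct)
  case (i_ax t G)
  then show ?case by (intro exI[of _ "{t}"]) (auto intro: ider.i_ax)
next
  case (i_Xe G t1 t2 t3)
  then obtain A B where AB: "A \<subseteq> G" "finite A" "ider A (LXi t1 t2)"
    "B \<subseteq> G" "finite B" "ider B (LAp t1 t3)" by blast
  have fin: "finite (fvls (A \<union> B))" using AB by (simp add: finite_fvls)
  have "ider (A \<union> B) (LAp t2 t3)"
    by (rule ider.i_Xe[OF ider_weaken[OF AB(3) _ fin] ider_weaken[OF AB(6) _ fin]]) auto
  then show ?case using AB by (intro exI[of _ "A \<union> B"]) auto
next
  case (i_Xi t1 x G t2)
  obtain A where A: "A \<subseteq> insert (LAp t1 (LV x)) G" "finite A" "ider A (LAp t2 (LV x))"
    using i_Xi.IH(1) by blast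
  obtain B where B: "B \<subseteq> G" "finite B" "ider B (LAp cL t1)" using i_Xi.IH(2) by blast
  obtain C where C: "C \<subseteq> G" "finite C" "ider (insert (LAp t1 (LV x)) C) (LAp t2 (LV x))"
    "ider C (LAp cL t1)" by (rule finite_support_merge[OF A B])
  moreover have "x \<notin> fvls C" using fvls_mono[OF C(1)] i_Xi.hyps(3) by blast
  ultimately have "ider C (LXi t1 t2)" using i_Xi.hyps(3) by (intro ider.i_Xi) auto
  then show ?case using C by blast
next
  case (i_XH t1 x G t2)
  obtain A where A: "A \<subseteq> insert (LAp t1 (LV x)) G" "finite A" "ider A (LAp cH (LAp t2 (LV x)))"
    using i_XH.IH(1) by blast
  obtain B where B: "B \<subseteq> G" "finite B" "ider B (LAp cL t1)" using i_XH.IH(2) by blast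
  obtain C where C: "C \<subseteq> G" "finite C" "ider (insert (LAp t1 (LV x)) C) (LAp cH (LAp t2 (LV x)))"
    "ider C (LAp cL t1)" by (rule finite_support_merge[OF A B])
  moreover have "x \<notin> fvls C" using fvls_mono[OF C(1)] i_XH.hyps(3) by blast
  ultimately have "ider C (LAp cH (LXi t1 t2))" using i_XH.hyps(3) by (intro ider.i_XH) auto
  then show ?case using C by blast
next
  case (i_Eq G t1 t2)
  then show ?case by (meson ider.i_Eq)
next
  case (i_H G t)
  then show ?case by (meson ider.i_H)
next
  case (i_LH G)
  show ?case by (intro exI[of _ "{}"]) (auto intro: ider.i_LH)
next
  case (i_LA G b)
  show ?case by (intro exI[of _ "{}"]) (auto intro: ider.i_LA)
qed

section \<open>Derived rules of I_0\<close>

lemma ider_L_At: "\<sigma> = To \<or> (\<exists>b. \<sigma> = Base b) \<Longrightarrow> ider G (LAp cL (At \<sigma>))"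
  by (elim disjE exE) (simp_all add: ider.i_LH ider.i_LA)

lemma ider_imp_intro:
  assumes "ider (insert a G) b" "ider G (LAp cH a)" "lc_at 0 a" "lc_at 0 b" "finite (fvls G)"
  shows "ider G (LImp a b)"
proof -
  have "finite (fvls G \<union> fvl a \<union> fvl b)" using assms(5) by simp
  then obtain x where x: "x \<notin> fvls G \<union> fvl a \<union> fvl b" by (rule obtain_fresh)
  let ?G = "insert (LAp (LAp cK a) (LV x)) G"
  have "ider ?G (LAp (LAp cK a) (LV x))" by (simp add: ider.i_ax)
  then have "ider ?G a" by (rule ider.i_Eq[OF _ beq_K]) (simp_all add: assms(3))
  then have "ider ?G (lsubst LV b)"
    using assms(5) by (intro ider_cut[OF assms(1)]) (auto intro: ider.i_ax)
  then have "ider ?G (LAp (LAp cK b) (LV x))"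
    by (intro ider.i_Eq[OF _ beq_sym[OF beq_K]]) (simp_all add: assms(4))
  moreover have "ider G (LAp cL (LAp cK a))"
    by (rule ider.i_Eq[OF assms(2) beq_H]) (simp_all add: assms(3))
  ultimately have "ider G (LXi (LAp cK a) (LAp cK b))" by (rule ider.i_Xi) (use x in simp)
  then show ?thesis by (rule ider.i_Eq[OF _ beq_sym[OF beq_Imp]]) (simp_all add: assms(3,4))
qed

lemma ider_imp_elim:
  assumes "ider G (LImp a b)" "ider G a" "lc_at 0 a" "lc_at 0 b"
  shows "ider G b"
proof -
  have "ider G (LXi (LAp cK a) (LAp cK b))"
    by (rule ider.i_Eq[OF assms(1) beq_Imp]) (simp_all add: assms(3,4))
  moreover have "ider G (LAp (LAp cK a) a)"
    by (rule ider.i_Eq[OF assms(2) beq_sym[OF beq_K]]) (simp_all add: assms(3))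
  ultimately have "ider G (LAp (LAp cK b) a)" by (rule ider.i_Xe)
  then show ?thesis by (rule ider.i_Eq[OF _ beq_K]) (simp_all add: assms(4))
qed

lemma ider_Xi_intro:
  assumes "ider (insert (LAp a (LV x)) G) (subst s (LV x) 0)" "ider G (LAp cL a)"
    and "x \<notin> fvls G \<union> fvl a \<union> fvl s" "lc_at (Suc 0) s"
  shows "ider G (LXi a (LAbs s))"
proof -
  have "ider (insert (LAp a (LV x)) G) (LAp (LAbs s) (LV x))"
    by (rule ider.i_Eq[OF assms(1) beq_sym[OF beq_beta]]) (simp add: assms(4))
  then show ?thesis using assms(2) by (rule ider.i_Xi) (use assms(3) in simp)
qed

lemma ider_Xi_elim:
  "ider G (LXi a (LAbs s)) \<Longrightarrow> ider G (LAp a t) \<Longrightarrow> lc_at 0 (subst s t 0) \<Longrightarrow> ider G (subst s t 0)"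
  by (meson ider.i_Xe ider.i_Eq beq_beta)

lemma ider_H_imp:
  assumes "ider G (LAp cH a)" "ider G (LAp cH b)" "lc_at 0 a" "lc_at 0 b" "finite (fvls G)"
  shows "ider G (LAp cH (LImp a b))"
proof -
  have "finite (fvls G \<union> fvl a \<union> fvl b)" using assms(5) by simp
  then obtain x where x: "x \<notin> fvls G \<union> fvl a \<union> fvl b" by (rule obtain_fresh)
  let ?G = "insert (LAp (LAp cK a) (LV x)) G"
  have "ider ?G (LAp cH b)" by (rule ider_weaken[OF assms(2)]) (use assms(5) in auto)
  then have "ider ?G (LAp cH (LAp (LAp cK b) (LV x)))"
    by (rule ider.i_Eq[OF _ beq_app[OF beq_refl beq_sym[OF beq_K]]]) (simp_all add: assms(4))
  moreover have "ider G (LAp cL (LAp cK a))"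
    by (rule ider.i_Eq[OF assms(1) beq_H]) (simp_all add: assms(3))
  ultimately have "ider G (LAp cH (LXi (LAp cK a) (LAp cK b)))" by (rule ider.i_XH) (use x in simp)
  then show ?thesis
    by (rule ider.i_Eq[OF _ beq_app[OF beq_refl beq_sym[OF beq_Imp]]]) (simp_all add: assms(3,4))
qed

lemma ider_H_all:
  assumes "ider (insert (LAp a (LV x)) G) (LAp cH (subst s (LV x) 0))" "ider G (LAp cL a)"
    and "x \<notin> fvls G \<union> fvl a \<union> fvl s" "lc_at (Suc 0) s"
  shows "ider G (LAp cH (LXi a (LAbs s)))"
proof -
  have "ider (insert (LAp a (LV x)) G) (LAp cH (LAp (LAbs s) (LV x)))"
    by (rule ider.i_Eq[OF assms(1) beq_app[OF beq_refl beq_sym[OF beq_beta]]]) (simp add: assms(4))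
  then show ?thesis using assms(2) by (rule ider.i_XH) (use assms(3) in simp)
qed

lemma ider_At_app:
  assumes "ider G (LAp (At (Arr \<sigma> \<tau>)) f)" "ider G (LAp (At (Base \<sigma>)) a)" "lc_at 0 f" "lc_at 0 a"
  shows "ider G (LAp (At \<tau>) (LAp f a))"
proof -
  have "lc_at (Suc 0) f" using assms(3) lc_at_mono by blast
  then have "ider G (LXi (LC (Abase \<sigma>)) (LAbs (LAp (At \<tau>) (LAp f (LB 0)))))"
    using beq_F[of "LC (Abase \<sigma>)" "At \<tau>" f] assms(3) by (intro ider.i_Eq[OF assms(1)]) simp_all
  from ider_Xi_elim[OF this] show ?thesis using assms(2,3,4) by simp
qed

primrec psize :: "('b,'c) pt \<Rightarrow> nat" where
  "psize (PV x) = 0" | "psize (PB i) = 0" | "psize (PC c) = 0"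
| "psize (PAp s t) = Suc (psize s + psize t)" | "psize (PImp s t) = Suc (psize s + psize t)"
| "psize (PAll \<sigma> t) = Suc (psize t)"

lemma psize_open [simp]: "psize (openp k (PV x) \<phi>) = psize \<phi>"
  by (induction \<phi> arbitrary: k) auto

lemma fvl_tr [simp]: "fvl (tr \<phi>) = fvp \<phi>"
  by (induction \<phi>) auto

lemma finite_fvp [simp]: "finite (fvp \<phi>)"
  by (induction \<phi>) auto

lemma FVs_insert [simp]: "FVs (insert \<phi> \<Delta>) = fvp \<phi> \<union> FVs \<Delta>"
  by (simp add: FVs_def)

lemma finite_FVs: "finite \<Delta> \<Longrightarrow> finite (FVs \<Delta>)"
  by (simp add: FVs_def)

lemma fvp_open_lower: "fvp \<phi> \<subseteq> fvp (openp k t \<phi>)"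
  by (induction \<phi> arbitrary: k) auto

lemma fvp_open_upper: "fvp (openp k t \<phi>) \<subseteq> fvp \<phi> \<union> fvp t"
  by (induction \<phi> arbitrary: k) auto

lemma fvp_close [simp]: "fvp (closep k x \<phi>) = fvp \<phi> - {x}"
  by (induction \<phi> arbitrary: k) auto

lemma typed_weaken: "typed ctype Ts t \<tau> \<Longrightarrow> typed ctype (Ts @ Vs) t \<tau>"
proof (induction rule: typed.induct)
  case (t_bnd i Ts)
  then show ?case using typed.t_bnd[of i "Ts @ Vs"] by (simp add: nth_append)
qed (auto intro: typed.intros)

lemma typed_lc_at: "typed ctype Ts t \<tau> \<Longrightarrow> lc_at (length Ts) (tr t)"
  by (induction rule: typed.induct) auto

lemma formula_lc_at: "formula ctype \<phi> \<Longrightarrow> lc_at 0 (tr \<phi>)"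
  unfolding formula_def using typed_lc_at by fastforce

lemma typed_open: "typed ctype Ts \<phi> \<tau>' \<Longrightarrow> Ts = Us @ [\<sigma>] \<Longrightarrow> typed ctype [] t \<sigma> \<Longrightarrow>
   typed ctype Us (openp (length Us) t \<phi>) \<tau>'"
proof (induction arbitrary: Us rule: typed.induct)
  case (t_bnd i Ts)
  show ?case
  proof (cases "i = length Us")
    case True
    then show ?thesis using t_bnd typed_weaken[of ctype "[]" t \<sigma> Us] by simp
  next
    case False
    then show ?thesis using t_bnd typed.t_bnd[of i Us] by (simp add: nth_append)
  qed
next
  case (t_all \<sigma>' Ts \<phi>)
  then show ?case using typed.t_all[of \<sigma>' ctype Us] by fastforce
qed (auto intro: typed.intros)

lemma typed_close: "typed ctype Us \<phi> \<tau>' \<Longrightarrow> snd x = \<sigma> \<Longrightarrow>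
   typed ctype (Us @ [\<sigma>]) (closep (length Us) x \<phi>) \<tau>'"
proof (induction rule: typed.induct)
  case (t_var Ts n \<tau>)
  then show ?case using typed.t_bnd[of "length Ts" "Ts @ [\<sigma>]"] by (auto intro: typed.intros)
next
  case (t_bnd i Ts)
  then show ?case using typed.t_bnd[of i "Ts @ [\<sigma>]"] by (simp add: nth_append)
next
  case (t_all \<sigma>' Ts \<phi>)
  then show ?case using typed.t_all[of \<sigma>' ctype "Ts @ [\<sigma>]"] by fastforce
qed (auto intro: typed.intros)

lemma tr_open: "lc_at 0 (tr t) \<Longrightarrow> lc_at (Suc k) (tr \<phi>) \<Longrightarrow>
   subst (tr \<phi>) (tr t) k = tr (openp k t \<phi>)"
  by (induction \<phi> arbitrary: k) auto

lemma tr_close: "lc_at k (tr \<phi>) \<Longrightarrow> lc_at 0 s \<Longrightarrow>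
   subst (tr (closep k x \<phi>)) s k = lsubst (LV(x := s)) (tr \<phi>)"
  by (induction \<phi> arbitrary: k) auto

inductive_cases typed_PImpE: "typed ctype Ts (PImp \<phi> \<psi>) \<tau>"
inductive_cases typed_PAllE: "typed ctype Ts (PAll \<sigma> \<phi>) \<tau>"
inductive_cases typed_PApE: "typed ctype Ts (PAp s t) \<tau>"
inductive_cases typed_PVE: "typed ctype Ts (PV x) \<tau>"
inductive_cases typed_PBE: "typed ctype Ts (PB i) \<tau>"
inductive_cases typed_PCE: "typed ctype Ts (PC c) \<tau>"

lemma pder_formula: "pder ctype \<Delta> \<phi> \<Longrightarrow> \<forall>\<delta>\<in>\<Delta>. formula ctype \<delta> \<Longrightarrow> formula ctype \<phi>"
proof (induction rule: pder.induct)
  case (p_impI \<phi> \<Delta> \<psi>)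
  then show ?case by (auto simp: formula_def intro: typed.t_imp)
next
  case (p_mp \<Delta> \<phi> \<psi>)
  then show ?case by (auto simp: formula_def elim: typed_PImpE)
next
  case (p_allI \<Delta> \<phi> x n \<tau>)
  then show ?case using typed_close[of ctype "[]" \<phi> To x \<tau>]
    by (auto simp: formula_def intro: typed.t_all)
next
  case (p_allE \<Delta> \<tau> \<phi> t)
  then show ?case using typed_open[of ctype "[\<tau>]" \<phi> To "[]" \<tau> t]
    by (auto simp: formula_def term_of_def elim!: typed_PAllE)
qed auto


section \<open>The typing lemma\<close>

definition const_axioms :: "('c \<Rightarrow> 'b ty) \<Rightarrow> ('b,'c) lt set" where
  "const_axioms ctype =
     {LAp (At (ctype c)) (LC (Sig c)) | c. True} \<union> {LAp cL (LC (Abase b)) | b. True}"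

definition var_axiom :: "'b var \<Rightarrow> ('b,'c) lt" where
  "var_axiom x = LAp (At (snd x)) (LV x)"

lemma fvl_var_axiom [simp]: "fvl (var_axiom x) = {x}"
  by (simp add: var_axiom_def)

text \<open>The induction is on the
  size, since a quantified body is opened with a fresh variable.\<close>
lemma typed_At:
  "typed ctype [] t \<tau> \<Longrightarrow> const_axioms ctype \<subseteq> G \<Longrightarrow> var_axiom ` fvp t \<subseteq> G \<Longrightarrow>
   finite (fvls G) \<Longrightarrow> ider G (LAp (At \<tau>) (tr t))"
proof (induction "psize t" arbitrary: t \<tau> G rule: less_induct)
  case less
  show ?case
  proof (cases t)
    case (PV x)
    then show ?thesis using less.prems(1,3)
      by (cases x) (auto simp: var_axiom_def intro: ider.i_ax elim: typed_PVE)
  next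
    case (PB i)
    then show ?thesis using less.prems(1) by (auto elim: typed_PBE)
  next
    case (PC c)
    then show ?thesis using less.prems(1,2)
      by (auto simp: const_axioms_def elim!: typed_PCE intro: ider.i_ax)
  next
    case (PAp t1 t2)
    obtain \<sigma> where ty: "typed ctype [] t1 (Arr \<sigma> \<tau>)" "typed ctype [] t2 (Base \<sigma>)"
      using less.prems(1) unfolding PAp by (auto elim: typed_PApE)
    have "ider G (LAp (At (Arr \<sigma> \<tau>)) (tr t1))" "ider G (LAp (At (Base \<sigma>)) (tr t2))"
      by (rule less.hyps; use ty less.prems(2-4) PAp in auto)+
    moreover have "lc_at 0 (tr t1)" "lc_at 0 (tr t2)" using ty typed_lc_at by fastforce+
    ultimately show ?thesis using PAp by (simp add: ider_At_app)
  next
    case (PImp \<phi> \<psi>)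
    have ty: "typed ctype [] \<phi> To" "typed ctype [] \<psi> To" "\<tau> = To"
      using less.prems(1) unfolding PImp by (auto elim: typed_PImpE)
    have "ider G (LAp (At To) (tr \<phi>))" "ider G (LAp (At To) (tr \<psi>))"
      by (rule less.hyps; use ty less.prems(2-4) PImp in auto)+
    moreover have "lc_at 0 (tr \<phi>)" "lc_at 0 (tr \<psi>)" using ty typed_lc_at by fastforce+
    ultimately have "ider G (LAp cH (LImp (tr \<phi>) (tr \<psi>)))"
      using ider_H_imp less.prems(4) by simp
    then show ?thesis using PImp ty(3) by simp
  next
    case (PAll \<sigma> \<phi>)
    have ty: "\<sigma> = To \<or> (\<exists>b. \<sigma> = Base b)" "typed ctype [\<sigma>] \<phi> To" "\<tau> = To"
      using less.prems(1) unfolding PAll by (auto elim: typed_PAllE)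
    have lc: "lc_at (Suc 0) (tr \<phi>)" using typed_lc_at[OF ty(2)] by simp
    have "finite (fvls G \<union> fvp \<phi>)" using less.prems(4) by simp
    then have "\<exists>n. (n, \<sigma>) \<notin> fvls G \<union> fvp \<phi>" by (rule fresh_var)
    then obtain n where n: "(n, \<sigma>) \<notin> fvls G \<union> fvp \<phi>" ..
    let ?x = "(n, \<sigma>)" and ?G = "insert (var_axiom (n, \<sigma>)) G"
    have "typed ctype [] (PV ?x) \<sigma>" by (rule typed.t_var)
    then have ty_open: "typed ctype [] (openp 0 (PV ?x) \<phi>) To"
      using typed_open[OF ty(2), of "[]"] by simp
    have ax_open: "var_axiom ` fvp (openp 0 (PV ?x) \<phi>) \<subseteq> ?G"
      using fvp_open_upper[of 0 "PV ?x" \<phi>] less.prems(3) PAll by auto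
    have "ider ?G (LAp (At To) (tr (openp 0 (PV ?x) \<phi>)))"
      using less.hyps[OF _ ty_open _ ax_open] less.prems(2,4) PAll by auto
    then have "ider (insert (LAp (At \<sigma>) (LV ?x)) G) (LAp cH (subst (tr \<phi>) (LV ?x) 0))"
      using tr_open[of "PV ?x" 0 \<phi>] lc by (simp add: var_axiom_def)
    from ider_H_all[OF this ider_L_At[OF ty(1)]] show ?thesis
      using n lc PAll ty(3) by simp
  qed
qed

text \<open>A canonical inhabitant of each A_tau, built from the chosen variables y_b:
  at a function type it is the constant function with an inhabitant of the codomain.\<close>
primrec inhabitant :: "('b \<Rightarrow> 'b var) \<Rightarrow> 'b ty \<Rightarrow> ('b,'c) lt" where
  "inhabitant ysel To = LAp cL cH"
| "inhabitant ysel (Base b) = LV (ysel b)"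
| "inhabitant ysel (Arr b \<tau>) = LAbs (inhabitant ysel \<tau>)"

lemma lc_at_inhabitant [simp]: "lc_at k (inhabitant ysel \<tau>)"
  by (induction \<tau> arbitrary: k) auto

lemma inhabitant_At:
  assumes "\<forall>b. snd (ysel b) = Base b" "\<forall>b. var_axiom (ysel b) \<in> G" "finite (fvls G)"
  shows "ider G (LAp (At \<tau>) (inhabitant ysel \<tau> :: ('b,'c) lt))"
  using assms(2,3)
proof (induction \<tau> arbitrary: G)
  case To
  then show ?case using ider.i_H[OF ider.i_LH] by simp
next
  case (Base b)
  then show ?case using ider.i_ax[of "var_axiom (ysel b)" G] assms(1) by (simp add: var_axiom_def)
next
  case (Arr b \<tau>)
  let ?w = "inhabitant ysel \<tau> :: ('b,'c) lt"
  have "finite (fvls G \<union> fvl ?w)" using Arr.prems(2) by simp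
  then obtain x where x: "x \<notin> fvls G \<union> fvl ?w" by (rule obtain_fresh)
  let ?G = "insert (LAp (LC (Abase b)) (LV x)) G"
  have "ider ?G (LAp (At \<tau>) ?w)" using Arr.IH[of ?G] Arr.prems by auto
  moreover have "beq (LAp (At \<tau>) ?w) (LAp (At \<tau>) (LAp (LAbs ?w) (LV x)))"
    by (rule beq_app[OF beq_refl beq_sym[OF beq_beta_eq]]) simp
  ultimately have "ider ?G (LAp (At \<tau>) (LAp (LAbs ?w) (LV x)))"
    by (rule ider.i_Eq) simp
  then have "ider ?G (subst (LAp (At \<tau>) (LAp (LAbs ?w) (LB 0))) (LV x) 0)" by simp
  from ider_Xi_intro[OF this ider.i_LA] x
  have "ider G (LXi (LC (Abase b)) (LAbs (LAp (At \<tau>) (LAp (LAbs ?w) (LB 0)))))" by simp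
  then have "ider G (LAp (LAp (LAp cF (LC (Abase b))) (At \<tau>)) (LAbs ?w))"
    by (rule ider.i_Eq[OF _ beq_sym[OF beq_F]]) simp_all
  then show ?case by simp
qed

section \<open>The invariant contexts\<close>

definition ctx :: "('c \<Rightarrow> 'b ty) \<Rightarrow> ('b,'c) pt set \<Rightarrow> 'b var set \<Rightarrow> ('b,'c) lt set" where
  "ctx ctype \<Delta> S = tr ` \<Delta> \<union> const_axioms ctype \<union> var_axiom ` S"

lemma fvls_ctx: "fvls (ctx ctype \<Delta> S) = FVs \<Delta> \<union> S"
  by (auto simp: ctx_def fvls_def FVs_def const_axioms_def)

lemma finite_fvls_ctx: "finite \<Delta> \<Longrightarrow> finite S \<Longrightarrow> finite (fvls (ctx ctype \<Delta> S))"
  by (simp add: fvls_ctx finite_FVs)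

lemma ctx_insert: "ctx ctype (insert \<phi> \<Delta>) S = insert (tr \<phi>) (ctx ctype \<Delta> S)"
  by (auto simp: ctx_def)

lemma typed_At_ctx:
  "typed ctype [] t \<tau> \<Longrightarrow> fvp t \<subseteq> S \<Longrightarrow> finite \<Delta> \<Longrightarrow> finite S \<Longrightarrow>
   ider (ctx ctype \<Delta> S) (LAp (At \<tau>) (tr t))"
  using finite_fvls_ctx[of \<Delta> S ctype] by (intro typed_At) (auto simp: ctx_def)

text \<open>Superfluous variable assumptions can be discharged: substitute the
  inhabitant of its type for every variable outside S.\<close>
lemma ctx_strengthen:
  fixes ctype :: "'c \<Rightarrow> 'b ty" and ysel :: "'b \<Rightarrow> 'b var"
  assumes der: "ider (ctx ctype \<Delta> (S \<union> S')) t"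
    and fin: "finite \<Delta>" "finite S" and sub: "FVs \<Delta> \<subseteq> S" "range ysel \<subseteq> S" "fvl t \<subseteq> S"
    and ysel: "\<forall>b. snd (ysel b) = Base b"
  shows "ider (ctx ctype \<Delta> S) t"
proof -
  define \<sigma> where "\<sigma> = (\<lambda>z. if z \<in> S then LV z else inhabitant ysel (snd z) :: ('b,'c) lt)"
  have id_on_S: "lsubst \<sigma> u = u" if "fvl u \<subseteq> S" for u
  proof -
    have "lsubst \<sigma> u = lsubst LV u" using that by (intro lsubst_cong) (auto simp: \<sigma>_def)
    then show ?thesis by simp
  qed
  have "ider (ctx ctype \<Delta> S) (lsubst \<sigma> t)"
  proof (rule ider_cut[OF der _ finite_fvls_ctx[OF fin]])
    show "closed_subst \<sigma>" by (simp add: closed_subst_def \<sigma>_def)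
  next
    fix g assume g: "g \<in> ctx ctype \<Delta> (S \<union> S')"
    show "ider (ctx ctype \<Delta> S) (lsubst \<sigma> g)"
    proof (cases "g \<in> ctx ctype \<Delta> S")
      case True
      then have "fvl g \<subseteq> S" using fvls_ctx[of ctype \<Delta> S] sub(1) by (auto simp: fvls_def)
      then show ?thesis using True id_on_S by (simp add: ider.i_ax)
    next
      case False
      then obtain z where "z \<notin> S" "g = var_axiom z" using g by (auto simp: ctx_def)
      moreover have "ider (ctx ctype \<Delta> S) (LAp (At (snd z)) (inhabitant ysel (snd z)))"
        using ysel sub(2) by (intro inhabitant_At finite_fvls_ctx fin) (auto simp: ctx_def)
      ultimately show ?thesis by (simp add: var_axiom_def \<sigma>_def)
    qed
  qed
  then show ?thesis using id_on_S[OF sub(3)] by simp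
qed

lemma ctx_rename:
  assumes der: "ider (ctx ctype \<Delta> (insert x S)) t"
    and fin: "finite \<Delta>" "finite S" and x: "x \<notin> FVs \<Delta>" and ty: "snd x' = snd x"
  shows "ider (insert (var_axiom x') (ctx ctype \<Delta> S)) (lsubst (LV(x := LV x')) t)"
proof (rule ider_cut[OF der])
  show "finite (fvls (insert (var_axiom x') (ctx ctype \<Delta> S)))"
    using finite_fvls_ctx[OF fin] by simp
next
  fix g assume g: "g \<in> ctx ctype \<Delta> (insert x S)"
  show "ider (insert (var_axiom x') (ctx ctype \<Delta> S)) (lsubst (LV(x := LV x')) g)"
  proof (cases "g = var_axiom x")
    case True
    then show ?thesis using ty by (simp add: var_axiom_def ider.i_ax)
  next
    case False
    then have "g \<in> ctx ctype \<Delta> S" "x \<notin> fvl g" using g x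
      by (auto simp: ctx_def const_axioms_def FVs_def)
    then show ?thesis by (simp add: ider.i_ax)
  qed
qed simp


text \<open>Forall-introduction at the level of the invariant contexts: the
  eigenvariable x is renamed to a fresh variable, which is then bound by Xi.\<close>
lemma ctx_all_intro:
  assumes der: "ider (ctx ctype \<Delta> (insert x S)) (tr \<phi>)" and fin: "finite \<Delta>" "finite S"
    and x: "x = (n, \<tau>)" "x \<notin> FVs \<Delta>" and dom: "\<tau> = To \<or> (\<exists>b. \<tau> = Base b)"
    and fo: "formula ctype \<phi>"
  shows "ider (ctx ctype \<Delta> S) (tr (PAll \<tau> (closep 0 x \<phi>)))"
proof -
  have lc: "lc_at 0 (tr \<phi>)" "lc_at (Suc 0) (tr (closep 0 x \<phi>))"
    using fo typed_close[of ctype "[]" \<phi> To x \<tau>] typed_lc_at x(1)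
    by (fastforce simp: formula_def formula_lc_at)+
  have "finite (fvls (ctx ctype \<Delta> S) \<union> fvp \<phi> \<union> {x})"
    using finite_fvls_ctx[OF fin] by simp
  then have "\<exists>m. (m, \<tau>) \<notin> fvls (ctx ctype \<Delta> S) \<union> fvp \<phi> \<union> {x}" by (rule fresh_var)
  then obtain m where m: "(m, \<tau>) \<notin> fvls (ctx ctype \<Delta> S) \<union> fvp \<phi> \<union> {x}" ..
  have "ider (insert (var_axiom (m, \<tau>)) (ctx ctype \<Delta> S)) (lsubst (LV(x := LV (m, \<tau>))) (tr \<phi>))"
    by (rule ctx_rename[OF der fin x(2)]) (simp add: x(1))
  then have "ider (insert (LAp (At \<tau>) (LV (m, \<tau>))) (ctx ctype \<Delta> S))
      (subst (tr (closep 0 x \<phi>)) (LV (m, \<tau>)) 0)"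
    using tr_close[of 0 \<phi> "LV (m, \<tau>)" x] lc(1) by (simp add: var_axiom_def)
  from ider_Xi_intro[OF this ider_L_At[OF dom]] show ?thesis
    using m lc(2) by simp
qed

lemma ctx_all_elim:
  assumes der: "ider (ctx ctype \<Delta> S) (tr (PAll \<tau> \<phi>))" and ty: "typed ctype [] t \<tau>"
    and sub: "fvp t \<subseteq> S" and fin: "finite \<Delta>" "finite S" and fo: "formula ctype (PAll \<tau> \<phi>)"
  shows "ider (ctx ctype \<Delta> S) (tr (openp 0 t \<phi>))"
proof -
  have ty_body: "typed ctype [\<tau>] \<phi> To" using fo by (auto simp: formula_def elim: typed_PAllE)
  have lc: "lc_at (Suc 0) (tr \<phi>)" using typed_lc_at[OF ty_body] by simp
  have open_eq: "subst (tr \<phi>) (tr t) 0 = tr (openp 0 t \<phi>)"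
    using tr_open[OF typed_lc_at[OF ty, simplified] lc] .
  have "lc_at 0 (tr (openp 0 t \<phi>))"
    using typed_lc_at[OF typed_open[OF ty_body _ ty, of "[]"]] by simp
  then have "lc_at 0 (subst (tr \<phi>) (tr t) 0)" using open_eq by simp
  moreover have "ider (ctx ctype \<Delta> S) (LXi (At \<tau>) (LAbs (tr \<phi>)))" using der by simp
  moreover have "ider (ctx ctype \<Delta> S) (LAp (At \<tau>) (tr t))" by (rule typed_At_ctx[OF ty sub fin])
  ultimately have "ider (ctx ctype \<Delta> S) (subst (tr \<phi>) (tr t) 0)"
    using ider_Xi_elim by blast
  then show ?thesis by (simp only: open_eq)
qed

lemma pder_translation:
  fixes ctype :: "'c \<Rightarrow> 'b ty" and ysel :: "'b \<Rightarrow> 'b var"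
  assumes "pder ctype \<Delta> \<phi>" "finite \<Delta>" "\<forall>\<delta>\<in>\<Delta>. formula ctype \<delta>"
    and "\<forall>b. snd (ysel b) = Base b" "finite S" "FVs \<Delta> \<union> fvp \<phi> \<union> range ysel \<subseteq> S"
  shows "ider (ctx ctype \<Delta> S) (tr \<phi>)"
  using assms
proof (induction arbitrary: S rule: pder.induct)
  case (p_ax \<phi> \<Delta>)
  then show ?case by (simp add: ctx_def ider.i_ax)
next
  case (p_impI \<phi> \<Delta> \<psi>)
  have fi: "formula ctype \<phi>" "formula ctype \<psi>"
    using p_impI.hyps(1) p_impI.prems(2) pder_formula[OF p_impI.hyps(2)] by auto
  have "ider (ctx ctype (insert \<phi> \<Delta>) S) (tr \<psi>)"
    by (rule p_impI.IH) (use p_impI.prems fi(1) in auto)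
  then have hyp: "ider (insert (tr \<phi>) (ctx ctype \<Delta> S)) (tr \<psi>)" by (simp add: ctx_insert)
  have "ider (ctx ctype \<Delta> S) (LAp (At To) (tr \<phi>))"
    by (rule typed_At_ctx) (use fi(1) p_impI.prems in \<open>auto simp: formula_def\<close>)
  then have "ider (ctx ctype \<Delta> S) (LImp (tr \<phi>) (tr \<psi>))"
    using ider_imp_intro[OF hyp] fi finite_fvls_ctx[OF p_impI.prems(1,4)] by (simp add: formula_lc_at)
  then show ?case by simp
next
  case (p_mp \<Delta> \<phi> \<psi>)
  have "formula ctype (PImp \<phi> \<psi>)" using pder_formula[OF p_mp.hyps(2)] p_mp.prems(2) .
  then have lc: "lc_at 0 (tr \<phi>)" "lc_at 0 (tr \<psi>)"
    by (auto simp: formula_def elim: typed_PImpE intro: formula_lc_at[unfolded formula_def])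
  have "ider (ctx ctype \<Delta> (S \<union> fvp \<phi>)) (tr \<phi>)"
    by (rule p_mp.IH(1)) (use p_mp.prems in auto)
  moreover have "ider (ctx ctype \<Delta> (S \<union> fvp \<phi>)) (tr (PImp \<phi> \<psi>))"
    by (rule p_mp.IH(2)) (use p_mp.prems in auto)
  ultimately have "ider (ctx ctype \<Delta> (S \<union> fvp \<phi>)) (tr \<psi>)"
    using ider_imp_elim lc by simp
  then show ?case
    by (rule ctx_strengthen) (use p_mp.prems in auto)
next
  case (p_allI \<Delta> \<phi> x n \<tau>)
  have "ider (ctx ctype \<Delta> (insert x S)) (tr \<phi>)"
    by (rule p_allI.IH) (use p_allI.prems in auto)
  moreover have "formula ctype \<phi>" using pder_formula[OF p_allI.hyps(1)] p_allI.prems(2) .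
  ultimately show ?case using ctx_all_intro p_allI.hyps(2-4) p_allI.prems(1,4) by blast
next
  case (p_allE \<Delta> \<tau> \<phi> t)
  have ty: "typed ctype [] t \<tau>" using p_allE.hyps(2) by (simp add: term_of_def)
  have "ider (ctx ctype \<Delta> (S \<union> fvp t)) (tr (PAll \<tau> \<phi>))"
    by (rule p_allE.IH) (use p_allE.prems fvp_open_lower[of \<phi> 0 t] in auto)
  moreover have "formula ctype (PAll \<tau> \<phi>)" using pder_formula[OF p_allE.hyps(1)] p_allE.prems(2) .
  ultimately have "ider (ctx ctype \<Delta> (S \<union> fvp t)) (tr (openp 0 t \<phi>))"
    using ctx_all_elim[OF _ ty] p_allE.prems(1,4) by simp
  then show ?case
    by (rule ctx_strengthen) (use p_allE.prems in auto)
qed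

lemma ctx_subset_GammaD:
  assumes "\<Delta>0 \<subseteq> \<Delta>" "\<forall>b. snd (ysel b) = Base b"
  shows "ctx ctype \<Delta>0 (FVs (insert \<phi> \<Delta>0) \<union> range ysel) \<subseteq> tr ` \<Delta> \<union> GammaD ctype ysel (insert \<phi> \<Delta>)"
proof -
  have "FVs (insert \<phi> \<Delta>0) \<subseteq> FVs (insert \<phi> \<Delta>)" using assms(1) by (auto simp: FVs_def)
  then show ?thesis using assms
    by (auto simp: ctx_def const_axioms_def var_axiom_def GammaD_def)
qed

theorem mainTheorem8:
  fixes ctype :: "'c::countable \<Rightarrow> 'b::finite ty"
    and \<Delta> :: "('b, 'c) pt set" and \<phi> :: "('b, 'c) pt"
    and ysel :: "'b \<Rightarrow> 'b var"
  assumes "\<forall>\<delta>\<in>\<Delta>. formula ctype \<delta>"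
    and "formula ctype \<phi>"
    and "\<forall>b. snd (ysel b) = Base b \<and> ysel b \<notin> FVs (insert \<phi> \<Delta>)"
    and "pred_derivable ctype \<Delta> \<phi>"
  shows "i0_derivable (tr ` \<Delta> \<union> GammaD ctype ysel (insert \<phi> \<Delta>)) (tr \<phi>)"
proof -
  obtain \<Delta>0 where \<Delta>0: "\<Delta>0 \<subseteq> \<Delta>" "finite \<Delta>0" "pder ctype \<Delta>0 \<phi>"
    using assms(4) unfolding pred_derivable_def by blast
  have ysel: "\<forall>b. snd (ysel b) = Base b" using assms(3) by blast
  let ?S = "FVs (insert \<phi> \<Delta>0) \<union> range ysel"
  have fin: "finite ?S" using \<Delta>0(2) by (simp add: finite_FVs)
  have wf: "\<forall>\<delta>\<in>\<Delta>0. formula ctype \<delta>" using assms(1) \<Delta>0(1) by blast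
  have "FVs \<Delta>0 \<union> fvp \<phi> \<union> range ysel \<subseteq> ?S" by auto
  from pder_translation[OF \<Delta>0(3,2) wf ysel fin this]
  have "ider (ctx ctype \<Delta>0 ?S) (tr \<phi>)" .
  then obtain G0 where G0: "G0 \<subseteq> ctx ctype \<Delta>0 ?S" "finite G0" "ider G0 (tr \<phi>)"
    using ider_compact by blast
  have "G0 \<subseteq> tr ` \<Delta> \<union> GammaD ctype ysel (insert \<phi> \<Delta>)"
    using G0(1) ctx_subset_GammaD[OF \<Delta>0(1) ysel] by (rule subset_trans)
  then show ?thesis using G0(2,3) unfolding i0_derivable_def by blast
qed

end
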